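(* Let $w \in S_n$ avoid the patterns $321$ and $231$, with Lehmer code $(L_1,\dots,L_n)$, and let $P$ be the bottom pipe dream of $w$. Let $i$ be any row of $P$ containing at least one crossing (i.e. $L_i \ge 1$), and consider the diagonal line going upward and rightward from the leftmost crossing of row $i$ (in square $(i,1)$), i.e. passing through the squares $(i-t, 1+t)$ for $t \ge 1$, $i-t \ge 1$. Then for every such $t$, neither the square $(i-t,1+t)$ on this line nor the square $(i-t,t)$ immediately to its left contains a crossing of $P$.
   Context: The Lehmer code of $w$ is $L_i = |\{j>i : w(j)<w(i)\}|$. The bottom pipe dream of $w \in S_n$ is the filling of the $n \times n$ grid (rows numbered $1,\dots,n$ from top to bottom, columns $1,\dots,n$ from left to right; square $(r,c)$ is in row $r$ and column $c$) in which square $(r,c)$ contains a crossing if $c \le L_r$ and a pair of elbows otherwise. Pattern containment: $w$ contains $p \in S_k$ if some subsequence $w(i_1),\dots,w(i_k)$, $i_1<\dots<i_k$, has the same relative order as $p$; otherwise $w$ avoids $p$. *)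

theory Defs
  imports "HOL-Combinatorics.Permutations"
begin

text \<open>Permutations w of S_n are functions nat => nat with w permutes {1..n}.
  Patterns p in S_k are given in one-line notation as lists [p(1),...,p(k)].\<close>

definition contains_pattern :: "nat \<Rightarrow> (nat \<Rightarrow> nat) \<Rightarrow> nat list \<Rightarrow> bool" where
  "contains_pattern n w p \<longleftrightarrow>
     (\<exists>f :: nat \<Rightarrow> nat.
        (\<forall>a < length p. f a \<in> {1..n}) \<and>
        (\<forall>a b. a < b \<and> b < length p \<longrightarrow> f a < f b) \<and>
        (\<forall>a < length p. \<forall>b < length p. (w (f a) < w (f b) \<longleftrightarrow> p ! a < p ! b)))"

definition avoids_pattern :: "nat \<Rightarrow> (nat \<Rightarrow> nat) \<Rightarrow> nat list \<Rightarrow> bool" where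
  "avoids_pattern n w p \<longleftrightarrow> \<not> contains_pattern n w p"

definition lehmer :: "nat \<Rightarrow> (nat \<Rightarrow> nat) \<Rightarrow> nat \<Rightarrow> nat" where
  "lehmer n w i = card {j. i < j \<and> j \<le> n \<and> w j < w i}"

definition bpd_crossing :: "nat \<Rightarrow> (nat \<Rightarrow> nat) \<Rightarrow> nat \<Rightarrow> nat \<Rightarrow> bool" where
  "bpd_crossing n w r c \<longleftrightarrow> r \<in> {1..n} \<and> c \<in> {1..n} \<and> c \<le> lehmer n w r"

end

theory Submission
  imports Defs
begin

text \<open>A crossing in row \<open>i\<close> gives an inversion \<open>(i, j)\<close>. Avoiding \<open>321\<close> and \<open>231\<close> means
  that no value lies below two values to its left; hence \<open>w r < w j\<close> for every \<open>r < i\<close>, and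
  then every \<open>k > r\<close> with \<open>w k < w r\<close> lies strictly between \<open>r\<close> and \<open>i\<close>. So row \<open>i - t\<close> has
  fewer than \<open>t\<close> crossings.\<close>

lemma contains_321_or_231:
  assumes "1 \<le> a" "a < b" "b < c" "c \<le> n"
    and "w a \<noteq> w b" "w c < w a" "w c < w b"
  shows "contains_pattern n w [3,2,1] \<or> contains_pattern n w [2,3,1]"
proof -
  have less_3: "(\<forall>x<Suc (Suc (Suc 0)). P x) \<longleftrightarrow> P 0 \<and> P (Suc 0) \<and> P (Suc (Suc 0))" for P
    by (auto simp: less_Suc_eq)
  have pairs_3: "(\<forall>x y. x < y \<and> y < Suc (Suc (Suc 0)) \<longrightarrow> P x y) \<longleftrightarrow>
      P 0 (Suc 0) \<and> P 0 (Suc (Suc 0)) \<and> P (Suc 0) (Suc (Suc 0))" for P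
    by (auto simp: less_Suc_eq)
  consider "w b < w a" | "w a < w b"
    using \<open>w a \<noteq> w b\<close> by fastforce
  then show ?thesis
  proof cases
    case 1
    have "contains_pattern n w [3,2,1]"
      unfolding contains_pattern_def
      by (rule exI[of _ "(!) [a, b, c]"]) (use assms 1 in \<open>simp add: less_3 pairs_3\<close>)
    then show ?thesis ..
  next
    case 2
    have "contains_pattern n w [2,3,1]"
      unfolding contains_pattern_def
      by (rule exI[of _ "(!) [a, b, c]"]) (use assms 2 in \<open>simp add: less_3 pairs_3\<close>)
    then show ?thesis ..
  qed
qed

lemma permutation_avoiding_321_231_inversion_above_earlier:
  assumes "w permutes {1..n}"
    and "avoids_pattern n w [3,2,1]" "avoids_pattern n w [2,3,1]"
    and "1 \<le> a" "a < b" "b < c" "c \<le> n" "w c < w b"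
  shows "w a < w c"
proof -
  have "w a \<noteq> w b" "w a \<noteq> w c"
    using permutes_inj[OF assms(1)] assms(5,6) by (metis inj_eq less_irrefl less_trans)+
  then show ?thesis
    using contains_321_or_231[OF assms(4-7), of w] assms(2,3,8)
    unfolding avoids_pattern_def by fastforce
qed

lemma lehmer_less_distance_to_descent:
  assumes w: "w permutes {1..n}"
    and avoids: "avoids_pattern n w [3,2,1]" "avoids_pattern n w [2,3,1]"
    and "1 \<le> r" "r < i" "i \<le> n" "lehmer n w i \<ge> 1"
  shows "lehmer n w r < i - r"
proof -
  note above_earlier = permutation_avoiding_321_231_inversion_above_earlier[OF w avoids]
  obtain j where j: "i < j" "j \<le> n" "w j < w i"
    using \<open>lehmer n w i \<ge> 1\<close> unfolding lehmer_def
    by (metis (mono_tags, lifting) Collect_empty_eq card.empty not_one_le_zero)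
  have "w r < w j"
    using above_earlier assms(4,5) j by blast
  have "{k. r < k \<and> k \<le> n \<and> w k < w r} \<subseteq> {r<..<i}"
  proof
    fix k assume k: "k \<in> {k. r < k \<and> k \<le> n \<and> w k < w r}"
    have "\<not> i < k"
      using above_earlier[of r i k] k assms(4,5) \<open>w r < w j\<close> j(3) by auto
    moreover have "k \<noteq> i"
      using k \<open>w r < w j\<close> j(3) by auto
    ultimately show "k \<in> {r<..<i}"
      using k by auto
  qed
  then have "lehmer n w r \<le> card {r<..<i}"
    unfolding lehmer_def by (intro card_mono) auto
  also have "\<dots> < i - r"
    using \<open>r < i\<close> by simp
  finally show ?thesis .
qed

theorem lemma17:
  fixes n :: nat and w :: "nat \<Rightarrow> nat" and i t :: nat
  assumes "w permutes {1..n}"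
    and "avoids_pattern n w [3,2,1]"
    and "avoids_pattern n w [2,3,1]"
    and "i \<in> {1..n}"
    and "lehmer n w i \<ge> 1"
    and "t \<ge> 1" and "i - t \<ge> 1"
  shows "\<not> bpd_crossing n w (i - t) (1 + t) \<and> \<not> bpd_crossing n w (i - t) t"
proof -
  have "lehmer n w (i - t) < i - (i - t)"
    using assms by (intro lehmer_less_distance_to_descent) auto
  also have "i - (i - t) = t"
    using assms(7) by simp
  finally show ?thesis
    unfolding bpd_crossing_def by auto
qed

end
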